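(* Let $\varepsilon \ge 0$ and $\delta \in [0,1]$, and let $\mathcal{M}\colon\{0,1\}\to\{0,1\}$ be a randomized mechanism satisfying $(\varepsilon,\delta)$-differential privacy, i.e. for all $z\in\{0,1\}$ and all $\mathrm{x}\neq \mathrm{x}'$ in $\{0,1\}$, $$\Pr[\mathcal{M}(\mathrm{x})=z]\le e^{\varepsilon}\Pr[\mathcal{M}(\mathrm{x}')=z]+\delta.$$ Consider any classifier of the following form: it is given two probability distributions $\mathcal{S}_0,\mathcal{S}_1$ on $\mathbb{R}$, and to an individual whose reported (perturbed) value is $z\in\{0,1\}$ it assigns a score drawn from $\mathcal{S}_z$. Let $z=\mathcal{M}(1)$ be the report of a positive sample (true value $1$) and $z'=\mathcal{M}(0)$ the report of a negative sample (true value $0$), with the two runs of $\mathcal{M}$ independent, and let $s\sim\mathcal{S}_z$, $s'\sim\mathcal{S}_{z'}$ be drawn independently (given $z,z'$). Define the AUC of the classifier as $$\mathrm{AUC}=\Pr[s>s']+\tfrac12\Pr[s=s'].$$ Then $$\mathrm{AUC}\le 1-\frac{1-\delta}{e^{\varepsilon}+1}.$$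
   Context: The classifier (adversary) has access only to the reported values and to the mechanism $\mathcal{M}$, not to the true values; the AUC is the probability that a randomly chosen positive sample is ranked above a randomly chosen negative sample, with ties counted as $1/2$. *)

theory Defs
  imports "HOL-Probability.Probability"
begin

text \<open>Bits {0,1} are encoded as bool (True = 1, False = 0).
  A randomized mechanism is M :: bool => bool pmf; score distributions
  S z are probability measures on the Borel reals.\<close>

definition dp_mech :: "real \<Rightarrow> real \<Rightarrow> (bool \<Rightarrow> bool pmf) \<Rightarrow> bool" where
  "dp_mech \<epsilon> \<delta> M \<longleftrightarrow>
     (\<forall>z x x'. x \<noteq> x' \<longrightarrow> pmf (M x) z \<le> exp \<epsilon> * pmf (M x') z + \<delta>)"

text \<open>AUC = Pr[s > s'] + 1/2 Pr[s = s'], where z ~ M 1, z' ~ M 0 independently,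
  and s ~ S z, s' ~ S z' independently given z, z' (law of total probability).\<close>
definition auc :: "(bool \<Rightarrow> bool pmf) \<Rightarrow> (bool \<Rightarrow> real measure) \<Rightarrow> real" where
  "auc M S = (\<Sum>z\<in>UNIV. \<Sum>z'\<in>UNIV. pmf (M True) z * pmf (M False) z' *
      (measure (S z \<Otimes>\<^sub>M S z') {p. fst p > snd p}
       + 1/2 * measure (S z \<Otimes>\<^sub>M S z') {p. fst p = snd p}))"

end

theory Submission imports Defs begin

text \<open>Write \<open>A(P, N) = Pr[s > s'] + Pr[s = s'] / 2\<close> for independent \<open>s \<sim> P\<close>, \<open>s' \<sim> N\<close>.
  Swapping the roles of \<open>s\<close> and \<open>s'\<close> shows \<open>A(P, N) + A(N, P) = 1\<close>, so \<open>A(P, P) = 1/2\<close> and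
  \<open>|A(P, N) - 1/2| \<le> 1/2\<close>. Conditioning on the two reports, the AUC of the classifier is
  \<open>1/2 + (A(S\<^sub>1, S\<^sub>0) - 1/2) (p - q)\<close> with \<open>p = Pr[M(1) = 1]\<close>, \<open>q = Pr[M(0) = 1]\<close>, and the
  privacy constraints on both outputs give \<open>|p - q| (e\<^sup>\<epsilon> + 1) \<le> e\<^sup>\<epsilon> - 1 + 2\<delta>\<close>.\<close>

definition pairwise_auc :: "'a::linorder measure \<Rightarrow> 'a measure \<Rightarrow> real" where
  "pairwise_auc P N = measure (P \<Otimes>\<^sub>M N) {p. fst p > snd p} + 1/2 * measure (P \<Otimes>\<^sub>M N) {p. fst p = snd p}"

lemma (in pair_sigma_finite) measure_pair_measure_swap:
  assumes "A \<in> sets (M1 \<Otimes>\<^sub>M M2)"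
  shows "measure (M2 \<Otimes>\<^sub>M M1) ((\<lambda>(x, y). (y, x)) -` A \<inter> space (M2 \<Otimes>\<^sub>M M1)) = measure (M1 \<Otimes>\<^sub>M M2) A"
  using assms by (subst distr_pair_swap) (simp add: measure_distr measurable_pair_swap')

lemma pairwise_auc_swap:
  fixes P N :: "'a::{linorder_topology, second_countable_topology} measure"
  assumes "prob_space P" "prob_space N" "sets P = sets borel" "sets N = sets borel"
  shows "pairwise_auc P N + pairwise_auc N P = 1"
proof -
  interpret PN: pair_prob_space P N
    using assms by (simp add: pair_prob_space_def pair_sigma_finite_def prob_space_imp_sigma_finite)
  let ?PN = "P \<Otimes>\<^sub>M N" and ?NP = "N \<Otimes>\<^sub>M P"
  have sets_PN: "sets ?PN = sets (borel \<Otimes>\<^sub>M borel)"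
    using assms by (auto intro: sets_pair_measure_cong)
  have space_PN: "space ?PN = UNIV" and space_NP: "space ?NP = UNIV"
    using sets_eq_imp_space_eq[OF assms(3)] sets_eq_imp_space_eq[OF assms(4)]
    by (simp_all add: space_pair_measure)
  have pred_sets: "{p. R (fst p) (snd p)} \<in> sets (borel \<Otimes>\<^sub>M borel)"
    if "Measurable.pred (borel \<Otimes>\<^sub>M borel) (\<lambda>p::'a \<times> 'a. R (fst p) (snd p))" for R
    using that by (simp add: pred_def space_pair_measure)
  have greater: "{p. fst p > snd p} \<in> sets ?PN"
    and less: "{p. fst p < snd p} \<in> sets ?PN"
    and equal: "{p. fst p = snd p} \<in> sets ?PN"
    unfolding sets_PN by (intro pred_sets; measurable)+
  have "measure ?NP {p. fst p > snd p} = measure ?PN {p. fst p < snd p}"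
    using PN.measure_pair_measure_swap[OF less] by (simp add: space_NP vimage_def case_prod_beta)
  moreover have "measure ?NP {p. fst p = snd p} = measure ?PN {p. fst p = snd p}"
    using PN.measure_pair_measure_swap[OF equal] by (simp add: space_NP vimage_def case_prod_beta eq_commute)
  moreover have "measure ?PN {p. fst p > snd p} + measure ?PN {p. fst p < snd p} + measure ?PN {p. fst p = snd p} = 1"
  proof -
    have "{p. fst p > snd p} \<union> {p. fst p < snd p} \<union> {p. fst p = snd p} = space ?PN"
      by (auto simp: space_PN)
    then have "1 = measure ?PN ({p. fst p > snd p} \<union> {p. fst p < snd p} \<union> {p. fst p = snd p})"
      using PN.prob_space by simp
    also have "\<dots> = measure ?PN ({p. fst p > snd p} \<union> {p. fst p < snd p}) + measure ?PN {p. fst p = snd p}"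
      using greater less equal by (intro PN.finite_measure_Union) auto
    also have "\<dots> = measure ?PN {p. fst p > snd p} + measure ?PN {p. fst p < snd p} + measure ?PN {p. fst p = snd p}"
      using greater less by (subst PN.finite_measure_Union) auto
    finally show ?thesis ..
  qed
  ultimately show ?thesis
    by (simp add: pairwise_auc_def)
qed

lemma abs_pairwise_auc_minus_half_le:
  fixes P N :: "'a::{linorder_topology, second_countable_topology} measure"
  assumes "prob_space P" "prob_space N" "sets P = sets borel" "sets N = sets borel"
  shows "\<bar>pairwise_auc P N - 1/2\<bar> \<le> 1/2"
proof -
  have "0 \<le> pairwise_auc P N" "0 \<le> pairwise_auc N P"
    by (simp_all add: pairwise_auc_def)
  then show ?thesis
    using pairwise_auc_swap[OF assms] by linarith
qed

lemma auc_eq_pairwise_auc: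
  assumes "\<And>z. prob_space (S z)" "\<And>z. sets (S z) = sets borel"
  shows "auc M S = 1/2 + (pairwise_auc (S True) (S False) - 1/2) * (pmf (M True) True - pmf (M False) True)"
proof -
  note swap = pairwise_auc_swap[OF assms(1) assms(1) assms(2) assms(2)]
  have self: "pairwise_auc (S z) (S z) = 1/2" for z
    using swap[of z z] by simp
  have flip: "pairwise_auc (S False) (S True) = 1 - pairwise_auc (S True) (S False)"
    using swap[of True False] by simp
  show ?thesis
    unfolding auc_def pairwise_auc_def[symmetric]
    by (simp add: UNIV_bool pmf_False_conv_True self flip algebra_simps)
qed

lemma dp_mech_bool_advantage:
  assumes "dp_mech \<epsilon> \<delta> M"
  shows "\<bar>pmf (M True) True - pmf (M False) True\<bar> * (exp \<epsilon> + 1) \<le> exp \<epsilon> - 1 + 2 * \<delta>"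
proof -
  let ?p = "pmf (M True) True" and ?q = "pmf (M False) True"
  have "?p \<le> exp \<epsilon> * ?q + \<delta>" "1 - ?p \<le> exp \<epsilon> * (1 - ?q) + \<delta>"
    "?q \<le> exp \<epsilon> * ?p + \<delta>" "1 - ?q \<le> exp \<epsilon> * (1 - ?p) + \<delta>"
    using assms unfolding dp_mech_def by (metis pmf_False_conv_True)+
  then have "(?p - ?q) * (exp \<epsilon> + 1) \<le> exp \<epsilon> - 1 + 2 * \<delta>"
    and "(?q - ?p) * (exp \<epsilon> + 1) \<le> exp \<epsilon> - 1 + 2 * \<delta>"
    by (simp_all add: algebra_simps)
  then show ?thesis
    by (simp add: abs_if)
qed

theorem theorem1:
  fixes \<epsilon> \<delta> :: real and M :: "bool \<Rightarrow> bool pmf" and S :: "bool \<Rightarrow> real measure"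
  assumes "\<epsilon> \<ge> 0" and "0 \<le> \<delta>" and "\<delta> \<le> 1"
    and "dp_mech \<epsilon> \<delta> M"
    and "\<And>z. prob_space (S z)" and "\<And>z. sets (S z) = sets borel"
  shows "auc M S \<le> 1 - (1 - \<delta>) / (exp \<epsilon> + 1)"
proof -
  let ?A = "pairwise_auc (S True) (S False)" and ?d = "pmf (M True) True - pmf (M False) True"
  have exp_pos: "0 < exp \<epsilon> + 1"
    by (simp add: add_pos_pos)
  have "auc M S = 1/2 + (?A - 1/2) * ?d"
    using auc_eq_pairwise_auc[OF assms(5,6)] .
  also have "\<dots> \<le> 1/2 + \<bar>?A - 1/2\<bar> * \<bar>?d\<bar>"
    by (metis abs_ge_self abs_mult add_left_mono)
  also have "\<dots> \<le> 1/2 + 1/2 * \<bar>?d\<bar>"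
    using abs_pairwise_auc_minus_half_le[OF assms(5,5,6,6)]
    by (intro add_left_mono mult_right_mono) simp_all
  also have "\<dots> \<le> 1/2 + (exp \<epsilon> - 1 + 2 * \<delta>) / (2 * (exp \<epsilon> + 1))"
    using dp_mech_bool_advantage[OF assms(4)] exp_pos by (simp add: field_simps)
  also have "\<dots> = 1 - (1 - \<delta>) / (exp \<epsilon> + 1)"
    using exp_pos by (simp add: field_simps)
  finally show ?thesis .
qed

end
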